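(* For every $n\ge1$: - the sum of the Wiener indices of all binary trees on $n$ vertices, i.e. the sum of $d(u,w)$ over all binary trees $T$ on $n$ vertices and all unordered pairs $\{u,w\}$ of distinct vertices of $T$, is $$\frac{n+2}{2}\,4^n-\frac{(2n+1)!}{(n!)^2};$$ - its generating function is $\frac{1-\sqrt{1-4x}-2x}{(1-4x)^2}$; - the number of such pairs $(T,\{u,w\})$ is $\binom n2\frac1{n+1}\binom{2n}{n}$. Consequently, the expected distance between a uniformly random pair of distinct vertices in a uniformly random binary tree on $n$ vertices is $$\sqrt{\pi n}-4+O\Bigl(\frac1{\sqrt n}\Bigr).$$
   Context: Binary trees are rooted trees in which every vertex has at most one left child and at most one right child, so a single child is designated left or right. The size is the number of vertices. $d(u,w)$ is the number of edges of the path between $u$ and $w$. *)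

theory Defs
  imports "HOL-Analysis.Analysis" "HOL-Library.Tree" "HOL-Library.Landau_Symbols"
begin

text \<open>Binary trees are modelled as shapes of type unit tree (HOL-Library.Tree):
  Leaf is the empty tree, Node l () r has a root with left subtree l and right
  subtree r (each possibly empty).
  A vertex is identified with its address: the list of directions
  (False = left, True = right) from the root.\<close>

fun vertices :: "'a tree \<Rightarrow> bool list set" where
  "vertices Leaf = {}"
| "vertices (Node l _ r) = insert [] (Cons False ` vertices l \<union> Cons True ` vertices r)"

text \<open>Length of the longest common prefix of two addresses (depth of the lowest common ancestor).\<close>
fun lcp_len :: "bool list \<Rightarrow> bool list \<Rightarrow> nat" where
  "lcp_len (a # as) (b # bs) = (if a = b then Suc (lcp_len as bs) else 0)"
| "lcp_len _ _ = 0"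

text \<open>Number of edges on the tree path between two vertices.\<close>
definition tdist :: "bool list \<Rightarrow> bool list \<Rightarrow> nat" where
  "tdist u w = length u + length w - 2 * lcp_len u w"

definition bintrees :: "nat \<Rightarrow> unit tree set" where
  "bintrees n = {t. size t = n}"

definition vpairs :: "'a tree \<Rightarrow> bool list set set" where
  "vpairs t = {e. e \<subseteq> vertices t \<and> card e = 2}"

definition pdist :: "bool list set \<Rightarrow> nat" where
  "pdist e = (THE d. \<exists>u w. e = {u, w} \<and> d = tdist u w)"

definition wiener :: "'a tree \<Rightarrow> nat" where
  "wiener t = (\<Sum>e\<in>vpairs t. pdist e)"

definition total_wiener :: "nat \<Rightarrow> nat" where
  "total_wiener n = (\<Sum>t\<in>bintrees n. wiener t)"

definition num_pairs :: "nat \<Rightarrow> nat" where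
  "num_pairs n = card {(t, e). t \<in> bintrees n \<and> e \<in> vpairs t}"

definition expected_dist :: "nat \<Rightarrow> real" where
  "expected_dist n = (\<Sum>t\<in>bintrees n. real (wiener t) / real (card (vpairs t)))
                      / real (card (bintrees n))"

end

theory Submission
  imports Defs "HOL-Computational_Algebra.Formal_Power_Series" "HOL-Real_Asymp.Real_Asymp"
begin

text \<open>Splitting a tree at its root gives convolution recurrences for the number of trees, their
  total depth and their total pairwise distance. For the generating functions, with C = 1 + x C^2
  the Catalan series and A = (1 - 4x)^(-1/2) the series of central binomial coefficients,
  1 - 2xC is the inverse of A, and the distance series becomes x (A^2)' + 2 A^2 - 2 (2x A' + A),
  whose coefficients are explicit. Summing gives the generating function, and dividing by the
  number of pairs binom(n,2) C_n reduces the asymptotics to the Wallis-product bounds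
  2 / (pi (2n+1)) <= (binom(2n,n) / 4^n)^2 <= 1 / (pi n).\<close>

section \<open>Depths and distances in a tree\<close>

lemma finite_vertices [simp]: "finite (vertices t)"
  by (induction t) auto

lemma Cons_vertices_disjoint: "Cons False ` vertices l \<inter> Cons True ` vertices r = {}"
  by auto

lemma Nil_notin_Cons_vertices: "[] \<notin> Cons False ` vertices l \<union> Cons True ` vertices r"
  by auto

lemma card_vertices: "card (vertices t) = size t"
proof (induction t)
  case (Node l x r)
  have "card (Cons False ` vertices l \<union> Cons True ` vertices r) = size l + size r"
    using Node by (subst card_Un_disjoint) (auto simp: Cons_vertices_disjoint card_image)
  then show ?case using Nil_notin_Cons_vertices[of l r] by simp
qed simp

lemma sum_Cons_image: "sum g (Cons a ` S) = (\<Sum>x\<in>S. g (a # x))"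
  by (subst sum.reindex) (auto simp: inj_on_def)

lemma sum_vertices_Node:
  "(\<Sum>u\<in>vertices (Node l x r). g u) = g [] + (\<Sum>u\<in>vertices l. g (False # u)) + (\<Sum>u\<in>vertices r. g (True # u))"
  using Nil_notin_Cons_vertices[of l r]
  by (simp add: sum.union_disjoint Cons_vertices_disjoint sum_Cons_image add.assoc)

lemma lcp_len_le: "lcp_len u w \<le> length u" "lcp_len u w \<le> length w"
  by (induction u w rule: lcp_len.induct) auto

lemma lcp_len_commute: "lcp_len u w = lcp_len w u"
  by (induction u w rule: lcp_len.induct) (auto elim: lcp_len.elims)

lemma tdist_commute: "tdist u w = tdist w u"
  by (simp add: tdist_def lcp_len_commute add.commute)

lemma lcp_len_self: "lcp_len u u = length u"
  by (induction u) auto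

lemma tdist_self [simp]: "tdist u u = 0"
  by (simp add: tdist_def lcp_len_self)

lemma tdist_Nil [simp]: "tdist [] w = length w" "tdist w [] = length w"
  by (simp_all add: tdist_def)

lemma tdist_Cons_same [simp]: "tdist (a # u) (a # w) = tdist u w"
  using lcp_len_le[of u w] by (simp add: tdist_def)

lemma tdist_Cons_diff: "a \<noteq> b \<Longrightarrow> tdist (a # u) (b # w) = length u + length w + 2"
  by (simp add: tdist_def)

definition depth_sum :: "'a tree \<Rightarrow> nat" where
  "depth_sum t = (\<Sum>u\<in>vertices t. length u)"

definition dist_sum :: "'a tree \<Rightarrow> nat" where
  "dist_sum t = (\<Sum>u\<in>vertices t. \<Sum>w\<in>vertices t. tdist u w)"

lemma depth_sum_Leaf [simp]: "depth_sum Leaf = 0" and dist_sum_Leaf [simp]: "dist_sum Leaf = 0"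
  by (simp_all add: depth_sum_def dist_sum_def)

lemma depth_sum_Node: "depth_sum (Node l x r) = depth_sum l + size l + depth_sum r + size r"
  by (simp add: depth_sum_def sum_vertices_Node sum.distrib sum_Suc card_vertices del: vertices.simps)

lemma dist_sum_Cons_diff:
  assumes "a \<noteq> b"
  shows "(\<Sum>u\<in>vertices l. \<Sum>w\<in>vertices r. tdist (a # u) (b # w))
       = size r * depth_sum l + size l * depth_sum r + 2 * size l * size r"
  using assms
  by (simp add: tdist_Cons_diff sum_Suc sum.distrib sum_distrib_left depth_sum_def card_vertices
      algebra_simps)

lemma dist_sum_Node:
  "dist_sum (Node l x r) = 2 * depth_sum (Node l x r) + dist_sum l + dist_sum r
     + 2 * (size r * depth_sum l + size l * depth_sum r + 2 * size l * size r)"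
  using dist_sum_Cons_diff[where a=False and b=True and l=l and r=r]
    dist_sum_Cons_diff[where a=True and b=False and l=r and r=l]
  by (simp add: dist_sum_def sum_vertices_Node sum.distrib depth_sum_def tdist_commute[of "[]"]
      del: vertices.simps)

lemma pdist_doubleton: "pdist {u, w} = tdist u w"
  unfolding pdist_def
  by (rule the_equality) (auto simp: doubleton_eq_iff tdist_commute)

lemma finite_vpairs [simp]: "finite (vpairs t)"
  unfolding vpairs_def by (rule finite_subset[of _ "Pow (vertices t)"]) auto

lemma card_vpairs: "card (vpairs t) = size t choose 2"
  unfolding vpairs_def using n_subsets[of "vertices t" 2] by (simp add: card_vertices)

lemma dist_sum_eq_wiener: "dist_sum t = 2 * wiener t"
proof -
  let ?V = "vertices t"
  let ?S = "{p \<in> ?V \<times> ?V. fst p \<noteq> snd p}"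
  have "dist_sum t = (\<Sum>p\<in>?V \<times> ?V. tdist (fst p) (snd p))"
    unfolding dist_sum_def sum.cartesian_product by (simp add: case_prod_beta)
  also have "\<dots> = (\<Sum>p\<in>?S. tdist (fst p) (snd p))"
    by (rule sum.mono_neutral_right) auto
  also have "\<dots> = (\<Sum>e\<in>vpairs t. \<Sum>p\<in>{p \<in> ?S. {fst p, snd p} = e}. tdist (fst p) (snd p))"
    by (rule sum.group[symmetric]) (auto simp: vpairs_def)
  also have "\<dots> = (\<Sum>e\<in>vpairs t. 2 * pdist e)"
  proof (rule sum.cong[OF refl])
    fix e assume "e \<in> vpairs t"
    then obtain a b where ab: "a \<noteq> b" "e = {a, b}" "a \<in> ?V" "b \<in> ?V"
      unfolding vpairs_def by (auto simp: card_2_iff)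
    then have "{p \<in> ?S. {fst p, snd p} = e} = {(a, b), (b, a)}"
      by (auto simp: doubleton_eq_iff)
    then show "(\<Sum>p\<in>{p \<in> ?S. {fst p, snd p} = e}. tdist (fst p) (snd p)) = 2 * pdist e"
      using ab by (simp add: pdist_doubleton tdist_commute)
  qed
  finally show ?thesis by (simp add: wiener_def sum_distrib_left)
qed

section \<open>Recurrences for totals over all trees\<close>

lemma size_bintrees: "t \<in> bintrees n \<Longrightarrow> size t = n"
  by (simp add: bintrees_def)

lemma bintrees_0: "bintrees 0 = {Leaf}"
  by (auto simp: bintrees_def)

lemma bintrees_Suc:
  "bintrees (Suc n) = (\<lambda>(k, l, r). Node l () r) ` (SIGMA k:{..n}. bintrees k \<times> bintrees (n - k))"
proof (intro equalityI subsetI)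
  fix t assume "t \<in> bintrees (Suc n)"
  then obtain l r where "t = Node l () r" "size l + size r = n"
    by (cases t) (auto simp: bintrees_def)
  then show "t \<in> (\<lambda>(k, l, r). Node l () r) ` (SIGMA k:{..n}. bintrees k \<times> bintrees (n - k))"
    by (intro image_eqI[of _ _ "(size l, l, r)"]) (auto simp: bintrees_def)
qed (auto simp: bintrees_def)

lemma finite_bintrees [simp]: "finite (bintrees n)"
proof (induction n rule: less_induct)
  case (less n)
  then show ?case
    by (cases n) (auto simp: bintrees_0 bintrees_Suc intro!: finite_SigmaI finite_cartesian_product)
qed

lemma sum_bintrees_Suc:
  "(\<Sum>t\<in>bintrees (Suc n). g t) = (\<Sum>k\<le>n. \<Sum>l\<in>bintrees k. \<Sum>r\<in>bintrees (n - k). g (Node l () r))"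
proof -
  have "inj_on (\<lambda>(k, l, r). Node l () r) (SIGMA k:{..n}. bintrees k \<times> bintrees (n - k))"
    by (auto simp: inj_on_def bintrees_def)
  then have "(\<Sum>t\<in>bintrees (Suc n). g t)
      = (\<Sum>(k, l, r)\<in>(SIGMA k:{..n}. bintrees k \<times> bintrees (n - k)). g (Node l () r))"
    unfolding bintrees_Suc by (subst sum.reindex) (auto simp: case_prod_beta)
  then show ?thesis
    by (simp add: sum.Sigma sum.cartesian_product)
qed

text \<open>The totals are real-valued so that they can serve as coefficients of formal power series.\<close>

definition tree_count :: "nat \<Rightarrow> real" where
  "tree_count n = real (card (bintrees n))"

definition vertex_total :: "nat \<Rightarrow> real" where
  "vertex_total n = real n * tree_count n"

definition depth_total :: "nat \<Rightarrow> real" where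
  "depth_total n = (\<Sum>t\<in>bintrees n. real (depth_sum t))"

definition dist_total :: "nat \<Rightarrow> real" where
  "dist_total n = (\<Sum>t\<in>bintrees n. real (dist_sum t))"

lemma tree_count_0: "tree_count 0 = 1" and depth_total_0: "depth_total 0 = 0"
  and dist_total_0: "dist_total 0 = 0"
  by (simp_all add: tree_count_def depth_total_def dist_total_def bintrees_0)

lemma sum_bintrees_pairs:
  "(\<Sum>l\<in>bintrees k. \<Sum>r\<in>bintrees m. c + f l + g r) =
     tree_count k * tree_count m * c + tree_count m * sum f (bintrees k) + tree_count k * (sum g (bintrees m) :: real)"
  by (simp add: tree_count_def sum.distrib sum_distrib_left sum_distrib_right algebra_simps)

lemma tree_count_Suc: "tree_count (Suc n) = (\<Sum>k\<le>n. tree_count k * tree_count (n - k))"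
  unfolding tree_count_def real_of_card sum_bintrees_Suc by simp

lemma depth_total_Suc:
  "depth_total (Suc n) = (\<Sum>k\<le>n. depth_total k * tree_count (n - k) + vertex_total k * tree_count (n - k)
     + tree_count k * depth_total (n - k) + tree_count k * vertex_total (n - k))"
proof -
  have "depth_total (Suc n) = (\<Sum>k\<le>n. \<Sum>l\<in>bintrees k. \<Sum>r\<in>bintrees (n - k).
          real n + real (depth_sum l) + real (depth_sum r))"
    unfolding depth_total_def sum_bintrees_Suc
    by (intro sum.cong refl) (auto simp: depth_sum_Node size_bintrees)
  also have "\<dots> = (\<Sum>k\<le>n. depth_total k * tree_count (n - k) + vertex_total k * tree_count (n - k)
     + tree_count k * depth_total (n - k) + tree_count k * vertex_total (n - k))"
    unfolding sum_bintrees_pairs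
    by (intro sum.cong refl) (auto simp: depth_total_def vertex_total_def algebra_simps)
  finally show ?thesis .
qed

lemma dist_total_Suc:
  "dist_total (Suc n) = 2 * depth_total (Suc n) + (\<Sum>k\<le>n. dist_total k * tree_count (n - k)
     + tree_count k * dist_total (n - k) + 2 * (depth_total k * vertex_total (n - k)
     + vertex_total k * depth_total (n - k) + 2 * (vertex_total k * vertex_total (n - k))))"
proof -
  define f :: "nat \<Rightarrow> unit tree \<Rightarrow> real" where
    "f m t = (2 + 2 * real m) * real (depth_sum t) + real (dist_sum t)" for m t
  have f_sum: "sum (f m) (bintrees k) = (2 + 2 * real m) * depth_total k + dist_total k" for m k
    by (simp add: f_def sum.distrib sum_distrib_left depth_total_def dist_total_def)
  have "dist_total (Suc n) = (\<Sum>k\<le>n. \<Sum>l\<in>bintrees k. \<Sum>r\<in>bintrees (n - k).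
          (2 * real k + 2 * real (n - k) + 4 * real k * real (n - k)) + f (n - k) l + f k r)"
    unfolding dist_total_def sum_bintrees_Suc
    by (intro sum.cong refl)
       (simp add: f_def dist_sum_Node depth_sum_Node size_bintrees, simp add: algebra_simps)
  also have "\<dots> = (\<Sum>k\<le>n. 2 * (depth_total k * tree_count (n - k) + vertex_total k * tree_count (n - k)
     + tree_count k * depth_total (n - k) + tree_count k * vertex_total (n - k))
     + (dist_total k * tree_count (n - k) + tree_count k * dist_total (n - k)
     + 2 * (depth_total k * vertex_total (n - k) + vertex_total k * depth_total (n - k)
     + 2 * (vertex_total k * vertex_total (n - k)))))"
    unfolding sum_bintrees_pairs f_sum
    by (intro sum.cong refl) (simp add: vertex_total_def algebra_simps del: of_nat_diff)
  also have "\<dots> = 2 * depth_total (Suc n) + (\<Sum>k\<le>n. dist_total k * tree_count (n - k)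
     + tree_count k * dist_total (n - k) + 2 * (depth_total k * vertex_total (n - k)
     + vertex_total k * depth_total (n - k) + 2 * (vertex_total k * vertex_total (n - k))))"
    unfolding depth_total_Suc by (simp add: sum.distrib sum_distrib_left)
  finally show ?thesis .
qed

section \<open>Generating functions\<close>

lemma Suc_times_central_binomial:
  "Suc n * ((2 * Suc n) choose Suc n) = (4 * n + 2) * ((2 * n) choose n)"
proof -
  have "Suc n * (Suc (Suc (2 * n)) choose Suc n) = Suc (Suc (2 * n)) * (Suc (2 * n) choose n)"
    by (rule Suc_times_binomial)
  moreover have "Suc (2 * n) choose n = Suc (2 * n) choose Suc n"
    using binomial_symmetric[of n "Suc (2 * n)"] by (simp add: Suc_diff_le)
  ultimately have "(Suc (Suc (2 * n)) choose Suc n) = 2 * (Suc (2 * n) choose Suc n)"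
    by simp
  moreover have "Suc n * (Suc (2 * n) choose Suc n) = Suc (2 * n) * ((2 * n) choose n)"
    by (rule Suc_times_binomial)
  ultimately show ?thesis by (simp add: algebra_simps)
qed

lemma Suc_times_central_binomial_real:
  "real (Suc n) * real ((2 * Suc n) choose Suc n) = (4 * real n + 2) * real ((2 * n) choose n)"
  using arg_cong[OF Suc_times_central_binomial[of n], of real]
  by (simp only: of_nat_mult of_nat_add of_nat_numeral)

lemma fps_nth_Abs_fps_mult: "fps_nth (Abs_fps f * Abs_fps g) n = (\<Sum>k\<le>n. f k * g (n - k))"
  by (simp add: fps_mult_nth atLeast0AtMost)

lemma fps_nth_numeral_mult: "fps_nth (numeral k * f :: 'a :: comm_ring_1 fps) n = numeral k * fps_nth f n"
  by (simp add: numeral_fps_const)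

lemma sum_reflect: "(\<Sum>k\<le>n. h k (n - k)) = (\<Sum>k\<le>(n::nat). h (n - k) k)"
  by (rule sum.reindex_bij_witness[of _ "\<lambda>k. n - k" "\<lambda>k. n - k"]) auto

definition count_fps :: "real fps" where "count_fps = Abs_fps tree_count"
definition vertex_fps :: "real fps" where "vertex_fps = Abs_fps vertex_total"
definition depth_fps :: "real fps" where "depth_fps = Abs_fps depth_total"
definition dist_fps :: "real fps" where "dist_fps = Abs_fps dist_total"
definition central_fps :: "real fps" where "central_fps = Abs_fps (\<lambda>n. real ((2 * n) choose n))"
definition geometric4_fps :: "real fps" where "geometric4_fps = Abs_fps (\<lambda>n. 4 ^ n)"

lemma count_fps_eq: "count_fps = 1 + fps_X * count_fps ^ 2"
proof (rule fps_ext)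
  fix n show "fps_nth count_fps n = fps_nth (1 + fps_X * count_fps ^ 2) n"
    by (cases n) (simp_all add: count_fps_def tree_count_0 tree_count_Suc fps_nth_Abs_fps_mult
        power2_eq_square)
qed

lemma vertex_fps_eq: "vertex_fps = fps_X * fps_deriv count_fps"
  by (rule fps_ext) (auto simp: count_fps_def vertex_fps_def vertex_total_def split: nat.split)

lemma depth_fps_eq:
  "depth_fps = fps_X * (depth_fps * count_fps + vertex_fps * count_fps
                        + count_fps * depth_fps + count_fps * vertex_fps)"
proof (rule fps_ext)
  fix n show "fps_nth depth_fps n = fps_nth (fps_X * (depth_fps * count_fps + vertex_fps * count_fps
                        + count_fps * depth_fps + count_fps * vertex_fps)) n"
    by (cases n) (simp_all add: count_fps_def depth_fps_def vertex_fps_def depth_total_0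
        depth_total_Suc fps_nth_Abs_fps_mult sum.distrib
        sum_reflect[of "\<lambda>i j. tree_count i * depth_total j"]
        sum_reflect[of "\<lambda>i j. tree_count i * vertex_total j"] mult.commute)
qed

lemma dist_fps_eq:
  "dist_fps = 2 * depth_fps + fps_X * (dist_fps * count_fps + count_fps * dist_fps
     + 2 * (depth_fps * vertex_fps + vertex_fps * depth_fps + 2 * (vertex_fps * vertex_fps)))"
proof (rule fps_ext)
  fix n show "fps_nth dist_fps n = fps_nth (2 * depth_fps + fps_X * (dist_fps * count_fps
     + count_fps * dist_fps + 2 * (depth_fps * vertex_fps + vertex_fps * depth_fps
     + 2 * (vertex_fps * vertex_fps)))) n"
    by (cases n) (simp_all add: count_fps_def depth_fps_def vertex_fps_def dist_fps_def
        dist_total_0 depth_total_0 dist_total_Suc fps_nth_Abs_fps_mult sum.distrib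
        numeral_fps_const sum_distrib_left[symmetric]
        sum_reflect[of "\<lambda>i j. tree_count i * dist_total j"]
        sum_reflect[of "\<lambda>i j. vertex_total i * depth_total j"] mult.commute)
qed

lemma central_fps_deriv_eq: "fps_deriv central_fps = 4 * fps_X * fps_deriv central_fps + 2 * central_fps"
proof (rule fps_ext)
  fix n show "fps_nth (fps_deriv central_fps) n = fps_nth (4 * fps_X * fps_deriv central_fps + 2 * central_fps) n"
    using Suc_times_central_binomial_real[of n]
    by (cases n) (simp_all add: central_fps_def fps_nth_numeral_mult algebra_simps)
qed

lemma geometric4_fps_eq: "geometric4_fps * (1 - 4 * fps_X) = 1"
proof (rule fps_ext)
  fix n show "fps_nth (geometric4_fps * (1 - 4 * fps_X)) n = fps_nth 1 n"
    by (cases n) (simp_all add: geometric4_fps_def fps_nth_numeral_mult algebra_simps)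
qed

lemma fps_cancel_two: "(2 :: real fps) * f = 2 * g \<Longrightarrow> f = g"
  by simp

definition sqrt4_fps :: "real fps" where "sqrt4_fps = 1 - 2 * fps_X * count_fps"

lemma sqrt4_fps_squared: "sqrt4_fps ^ 2 = 1 - 4 * fps_X"
  using count_fps_eq unfolding sqrt4_fps_def by algebra

lemma sqrt4_fps_times_deriv: "sqrt4_fps * fps_deriv sqrt4_fps = -2"
proof -
  have "fps_deriv (sqrt4_fps ^ 2) = fps_deriv (1 - 4 * fps_X)"
    by (simp only: sqrt4_fps_squared)
  then have "2 * (sqrt4_fps * fps_deriv sqrt4_fps) = 2 * (-2)"
    by (simp add: power2_eq_square algebra_simps)
  then show ?thesis by (rule fps_cancel_two)
qed

lemma central_fps_times_sqrt4_fps: "central_fps * sqrt4_fps = 1"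
proof -
  let ?p = "central_fps * sqrt4_fps"
  have sqrt4_0: "fps_nth sqrt4_fps 0 = 1"
    by (simp add: sqrt4_fps_def fps_nth_numeral_mult)
  have "fps_deriv ?p * sqrt4_fps
      = fps_deriv central_fps * sqrt4_fps ^ 2 + central_fps * (sqrt4_fps * fps_deriv sqrt4_fps)"
    by (simp add: power2_eq_square algebra_simps)
  also have "\<dots> = fps_deriv central_fps * (1 - 4 * fps_X) - 2 * central_fps"
    by (simp only: sqrt4_fps_squared sqrt4_fps_times_deriv) simp
  also have "\<dots> = 0"
    using central_fps_deriv_eq by (simp add: algebra_simps)
  finally have "fps_deriv ?p * sqrt4_fps = 0" .
  moreover have "sqrt4_fps \<noteq> 0"
    using sqrt4_0 by auto
  ultimately have "fps_deriv ?p = 0"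
    by (metis mult_eq_0_iff)
  then have "?p = fps_const (fps_nth ?p 0)"
    by (simp only: fps_deriv_eq_0_iff)
  then show ?thesis
    by (simp add: sqrt4_0 central_fps_def)
qed

lemma vertex_fps_eq_central_minus_count: "vertex_fps = central_fps - count_fps"
proof -
  have "fps_deriv sqrt4_fps = central_fps * (sqrt4_fps * fps_deriv sqrt4_fps)"
    using central_fps_times_sqrt4_fps by (metis mult.assoc mult_1)
  also have "\<dots> = 2 * (- central_fps)"
    by (simp add: sqrt4_fps_times_deriv)
  finally have "2 * (count_fps + fps_X * fps_deriv count_fps) = 2 * central_fps"
    by (simp add: sqrt4_fps_def algebra_simps)
  then have "count_fps + fps_X * fps_deriv count_fps = central_fps"
    by (rule fps_cancel_two)
  then show ?thesis
    using vertex_fps_eq by (simp add: algebra_simps)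
qed

lemma geometric4_fps_eq_central_squared: "geometric4_fps = central_fps ^ 2"
proof -
  have "central_fps ^ 2 * (1 - 4 * fps_X) = 1"
    using central_fps_times_sqrt4_fps
    by (metis sqrt4_fps_squared power_mult_distrib power_one)
  then have "geometric4_fps = geometric4_fps * (central_fps ^ 2 * (1 - 4 * fps_X))"
    by simp
  also have "\<dots> = central_fps ^ 2"
    using geometric4_fps_eq by (simp add: mult_ac)
  finally show ?thesis .
qed

lemma fps_deriv_geometric4_fps: "fps_deriv geometric4_fps = 4 * geometric4_fps ^ 2"
proof -
  have "fps_deriv geometric4_fps * (1 - 4 * fps_X) = 4 * geometric4_fps"
    using arg_cong[OF geometric4_fps_eq, of fps_deriv] by (simp add: algebra_simps)
  then have "fps_deriv geometric4_fps * (geometric4_fps * (1 - 4 * fps_X)) = 4 * geometric4_fps ^ 2"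
    by (simp add: power2_eq_square mult_ac)
  then show ?thesis by (simp add: geometric4_fps_eq)
qed

lemma fps_deriv_central_fps: "fps_deriv central_fps = 2 * central_fps * geometric4_fps"
proof -
  have "fps_deriv central_fps * (1 - 4 * fps_X) = 2 * central_fps"
    using central_fps_deriv_eq by (simp add: algebra_simps)
  then have "fps_deriv central_fps * (geometric4_fps * (1 - 4 * fps_X)) = 2 * central_fps * geometric4_fps"
    by (simp add: mult_ac)
  then show ?thesis by (simp add: geometric4_fps_eq)
qed

lemma dist_fps_closed_form:
  "dist_fps = fps_X * fps_deriv geometric4_fps + 2 * geometric4_fps
              - 2 * (2 * fps_X * fps_deriv central_fps + central_fps)"
proof -
  note inv = central_fps_times_sqrt4_fps[unfolded sqrt4_fps_def]
  have central_sq: "4 * fps_X * central_fps ^ 2 = central_fps ^ 2 - 1"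
    using geometric4_fps_eq unfolding geometric4_fps_eq_central_squared by algebra
  have count_central: "count_fps * (central_fps + 1) = 2 * central_fps"
  proof -
    have "fps_X * (2 * (count_fps * (central_fps + 1) - 2 * central_fps)) = 0"
      using inv central_sq by algebra
    then have "2 * (count_fps * (central_fps + 1) - 2 * central_fps) = 0"
      by simp
    then have "2 * (count_fps * (central_fps + 1)) = 2 * (2 * central_fps)"
      by algebra
    then show ?thesis by (rule fps_cancel_two)
  qed
  have depth: "depth_fps = 2 * fps_X * vertex_fps * count_fps * central_fps"
    using depth_fps_eq inv by algebra
  have dist: "dist_fps = central_fps * (2 * depth_fps
                + 4 * fps_X * (depth_fps * vertex_fps + vertex_fps * vertex_fps))"
    using dist_fps_eq inv by algebra
  show ?thesis
    unfolding fps_deriv_geometric4_fps fps_deriv_central_fps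
    unfolding geometric4_fps_eq_central_squared
    using inv count_central central_sq vertex_fps_eq_central_minus_count depth dist
    by algebra
qed

lemma dist_total_closed:
  "dist_total n = (real n + 2) * 4 ^ n - 2 * (2 * real n + 1) * real ((2 * n) choose n)"
  using arg_cong[OF dist_fps_closed_form, of "\<lambda>f. fps_nth f n"]
  by (cases n) (simp_all add: dist_fps_def geometric4_fps_def central_fps_def fps_nth_numeral_mult
      algebra_simps)

lemma tree_count_closed: "tree_count n = real ((2 * n) choose n) / (real n + 1)"
proof -
  have "fps_nth (count_fps + fps_X * fps_deriv count_fps) n = fps_nth central_fps n"
    using vertex_fps_eq_central_minus_count vertex_fps_eq by (simp add: algebra_simps)
  then have "tree_count n + real n * tree_count n = real ((2 * n) choose n)"
    by (cases n) (simp_all add: count_fps_def central_fps_def)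
  then show ?thesis by (simp add: field_simps)
qed

section \<open>Closed forms\<close>

lemma total_wiener_eq_half_dist_total: "real (total_wiener n) = dist_total n / 2"
  by (simp add: total_wiener_def dist_total_def dist_sum_eq_wiener sum_divide_distrib)

lemma total_wiener_closed:
  "real (total_wiener n) = (real n + 2) / 2 * 4 ^ n - (2 * real n + 1) * real ((2 * n) choose n)"
  by (simp add: total_wiener_eq_half_dist_total dist_total_closed field_simps)

lemma fact_odd_div_fact_squared:
  "fact (2 * n + 1) / (fact n) ^ 2 = (2 * real n + 1) * real ((2 * n) choose n)"
proof -
  have "real ((2 * n) choose n) = fact (2 * n) / (fact n * fact n)"
    using binomial_fact[of n "2 * n", where 'a = real] by simp
  moreover have "fact (2 * n + 1) = (2 * real n + 1) * (fact (2 * n) :: real)"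
    by (simp add: algebra_simps)
  ultimately show ?thesis by (simp add: power2_eq_square)
qed

lemma card_bintrees: "real (card (bintrees n)) = real ((2 * n) choose n) / (real n + 1)"
  using tree_count_closed by (simp add: tree_count_def)

lemma num_pairs_eq: "num_pairs n = card (bintrees n) * (n choose 2)"
proof -
  have "{(t, e). t \<in> bintrees n \<and> e \<in> vpairs t} = Sigma (bintrees n) vpairs" by auto
  then have "num_pairs n = (\<Sum>t\<in>bintrees n. card (vpairs t))"
    by (simp add: num_pairs_def card_SigmaI)
  then show ?thesis
    by (simp add: card_vpairs size_bintrees)
qed

lemma gbinomial_minus_three_halves:
  "((-3/2 :: real) gchoose n) * (-4) ^ n = (2 * real n + 1) * real ((2 * n) choose n)"
proof (induction n)
  case (Suc n)
  have "real (Suc n) * ((-3/2 :: real) gchoose Suc n) = (-3/2 - real n) * ((-3/2) gchoose n)"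
    using gbinomial_mult_1[of "-3/2 :: real" n] by (simp add: algebra_simps)
  then have "real (Suc n) * (((-3/2 :: real) gchoose Suc n) * (-4) ^ Suc n)
      = (-3/2 - real n) * ((-3/2) gchoose n) * ((-4) * (-4) ^ n)"
    by (simp only: power_Suc mult.assoc[symmetric])
  also have "\<dots> = (2 * real n + 3) * 2 * (((-3/2 :: real) gchoose n) * (-4) ^ n)"
    by (simp add: algebra_simps)
  also have "\<dots> = (2 * real n + 3) * ((4 * real n + 2) * real ((2 * n) choose n))"
    using Suc.IH by (simp add: algebra_simps)
  also have "\<dots> = real (Suc n) * ((2 * real (Suc n) + 1) * real ((2 * Suc n) choose Suc n))"
    unfolding Suc_times_central_binomial_real[symmetric] by (simp only: of_nat_Suc algebra_simps)
  finally show ?case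
    by (metis mult_cancel_left of_nat_eq_0_iff nat.distinct(1))
qed simp

lemma powr_minus_three_halves:
  assumes "u > 0"
  shows "u powr (-3/2) = sqrt u / u ^ 2"
proof -
  have "u powr (3/2) = u powr (1 + 1/2)"
    by simp
  also have "\<dots> = u powr 1 * u powr (1/2)"
    by (rule powr_add)
  also have "\<dots> = u * sqrt u"
    using assms by (simp add: powr_half_sqrt)
  finally have "u powr (3/2) = u * sqrt u" .
  moreover have "sqrt u * sqrt u = u"
    using assms by simp
  ultimately show ?thesis
    using assms by (simp add: powr_minus_divide field_simps power2_eq_square)
qed

lemma odd_central_binomial_sums:
  fixes x :: real
  assumes "\<bar>x\<bar> < 1/4"
  shows "(\<lambda>n. (2 * real n + 1) * real ((2 * n) choose n) * x ^ n) sums (sqrt (1 - 4 * x) / (1 - 4 * x) ^ 2)"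
proof -
  have "(\<lambda>n. ((-3/2) gchoose n) * (-4 * x) ^ n) sums ((1 + -4 * x) powr (-3/2))"
    by (rule gen_binomial_real) (use assms in simp)
  moreover have "((-3/2 :: real) gchoose n) * (-4 * x) ^ n = (2 * real n + 1) * real ((2 * n) choose n) * x ^ n" for n
    by (simp only: power_mult_distrib mult.assoc[symmetric] gbinomial_minus_three_halves)
  moreover have "(1 - 4 * x) powr (-3/2) = sqrt (1 - 4 * x) / (1 - 4 * x) ^ 2"
    by (rule powr_minus_three_halves) (use assms in simp)
  ultimately show ?thesis
    by simp
qed

lemma total_wiener_sums:
  fixes x :: real
  assumes x: "\<bar>x\<bar> < 1/4"
  shows "(\<lambda>n. real (total_wiener n) * x ^ n) sums ((1 - sqrt (1 - 4 * x) - 2 * x) / (1 - 4 * x) ^ 2)"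
proof -
  have y: "norm (4 * x) < 1" using x by simp
  have "(\<lambda>n. (1/2) * (real (Suc n) * (4 * x) ^ n + (4 * x) ^ n)
         - (2 * real n + 1) * real ((2 * n) choose n) * x ^ n)
        sums ((1/2) * (1 / (1 - 4 * x) ^ 2 + 1 / (1 - 4 * x)) - sqrt (1 - 4 * x) / (1 - 4 * x) ^ 2)"
    using geometric_deriv_sums[OF y] geometric_sums[OF y] odd_central_binomial_sums[OF x]
    by (intro sums_diff sums_mult sums_add) simp_all
  moreover have "(1/2) * (real (Suc n) * (4 * x) ^ n + (4 * x) ^ n)
         - (2 * real n + 1) * real ((2 * n) choose n) * x ^ n = real (total_wiener n) * x ^ n" for n
    by (simp add: total_wiener_closed power_mult_distrib algebra_simps)
  moreover have "(1/2) * (1 / (1 - 4 * x) ^ 2 + 1 / (1 - 4 * x)) - sqrt (1 - 4 * x) / (1 - 4 * x) ^ 2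
      = (1 - sqrt (1 - 4 * x) - 2 * x) / (1 - 4 * x) ^ 2"
  proof -
    have "(1/2) * (1 / u ^ 2 + 1 / u) - r / u ^ 2 = ((1 + u) / 2 - r) / u ^ 2"
      if "u \<noteq> 0" for u r :: real
      using that by (simp add: field_simps power2_eq_square)
    moreover have "1 - 4 * x \<noteq> 0" using x by simp
    ultimately show ?thesis by simp
  qed
  ultimately show ?thesis by simp
qed

section \<open>Wallis bounds for central binomial coefficients\<close>

definition central_ratio :: "nat \<Rightarrow> real" where
  "central_ratio n = real ((2 * n) choose n) / 4 ^ n"

lemma central_ratio_pos: "central_ratio n > 0"
  by (simp add: central_ratio_def)

lemma central_ratio_Suc:
  "central_ratio (Suc n) = central_ratio n * (2 * real n + 1) / (2 * real n + 2)"
proof -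
  have ratio_step: "((4 * x + 2) * b / (x + 1)) / (4 * f) = b / f * (2 * x + 1) / (2 * x + 2)"
    if "x \<ge> 0" "f > 0" for x b f :: real
    using that by (simp add: divide_simps) (simp add: algebra_simps)
  define B B' where "B = real ((2 * n) choose n)" and "B' = real ((2 * Suc n) choose Suc n)"
  have "real (Suc n) * B' = (4 * real n + 2) * B"
    unfolding B_def B'_def by (rule Suc_times_central_binomial_real)
  then have B': "B' = (4 * real n + 2) * B / (real n + 1)"
    by (simp add: field_simps)
  have ratios: "central_ratio (Suc n) = B' / 4 ^ Suc n" "central_ratio n = B / 4 ^ n"
    unfolding central_ratio_def B_def B'_def by (rule refl)+
  show ?thesis
    unfolding ratios B' power_Suc by (rule ratio_step) simp_all
qed

lemma wallis_partial_product:
  "(\<Prod>k=1..n. 4 * real k ^ 2 / (4 * real k ^ 2 - 1)) = 1 / ((2 * real n + 1) * central_ratio n ^ 2)"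
proof (induction n)
  case (Suc n)
  have "4 * real (Suc n) ^ 2 - 1 = (2 * real n + 1) * (2 * real n + 3)"
    by (simp add: power2_eq_square algebra_simps)
  then show ?case
    using Suc.IH central_ratio_pos[of n]
    by (simp add: prod.cl_ivl_Suc central_ratio_Suc field_simps power2_eq_square)
qed (simp add: central_ratio_def)

text \<open>The partial Wallis products increase to \<open>pi / 2\<close>, which gives the lower bound; after
  multiplication by \<open>(2 n + 1) / (2 n)\<close> they decrease to \<open>pi / 2\<close>, which gives the upper bound.\<close>

lemma central_ratio_sq_lower: "2 / pi \<le> (2 * real n + 1) * central_ratio n ^ 2"
proof -
  define P where "P n = (\<Prod>k=1..n. 4 * real k ^ 2 / (4 * real k ^ 2 - 1))" for n
  have "incseq P"
  proof (rule incseq_SucI)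
    fix n
    have "real (Suc n) ^ 2 \<ge> 1"
      by simp
    then have "4 * real (Suc n) ^ 2 - 1 > 0"
      by linarith
    then have "4 * real (Suc n) ^ 2 / (4 * real (Suc n) ^ 2 - 1) \<ge> 1"
      by (simp add: le_divide_eq)
    moreover have "P n \<ge> 0"
      unfolding P_def wallis_partial_product using central_ratio_pos[of n] by simp
    ultimately have "P n * 1 \<le> P n * (4 * real (Suc n) ^ 2 / (4 * real (Suc n) ^ 2 - 1))"
      by (rule mult_left_mono)
    then show "P n \<le> P (Suc n)"
      unfolding P_def by (simp add: prod.cl_ivl_Suc)
  qed
  then have "P n \<le> pi / 2"
    using wallis unfolding P_def by (rule incseq_le)
  then have "1 / ((2 * real n + 1) * central_ratio n ^ 2) \<le> pi / 2"
    by (simp only: P_def wallis_partial_product)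
  moreover have "(2 * real n + 1) * central_ratio n ^ 2 > 0"
    using central_ratio_pos[of n] by simp
  ultimately show ?thesis
    using pi_gt_zero by (simp add: field_simps)
qed

lemma central_ratio_sq_upper:
  assumes "n \<ge> 1"
  shows "real n * central_ratio n ^ 2 \<le> 1 / pi"
proof -
  define Q where "Q m = 1 / ((2 * real m + 2) * central_ratio (Suc m) ^ 2)" for m
  have "decseq Q"
  proof (rule decseq_SucI)
    fix m
    let ?q = "central_ratio (Suc m)"
    have square_step: "c * (q * a / c) ^ 2 = q ^ 2 * (a ^ 2 / c)" if "c > 0" for c q a :: real
      using that by (simp add: field_simps power2_eq_square)
    have "(2 * real m + 2) * (2 * real m + 4) \<le> (2 * real m + 3) ^ 2"
      by (simp add: power2_eq_square algebra_simps)
    then have "2 * real m + 2 \<le> (2 * real m + 3) ^ 2 / (2 * real m + 4)"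
      by (simp add: le_divide_eq)
    then have "?q ^ 2 * (2 * real m + 2) \<le> ?q ^ 2 * ((2 * real m + 3) ^ 2 / (2 * real m + 4))"
      by (rule mult_left_mono) simp
    also have "\<dots> = (2 * real m + 4) * (?q * (2 * real m + 3) / (2 * real m + 4)) ^ 2"
      using square_step[of "2 * real m + 4" ?q "2 * real m + 3"] by simp
    also have "\<dots> = (2 * real (Suc m) + 2) * central_ratio (Suc (Suc m)) ^ 2"
      using central_ratio_Suc[of "Suc m"] by (simp add: algebra_simps)
    finally have "(2 * real m + 2) * ?q ^ 2
        \<le> (2 * real (Suc m) + 2) * central_ratio (Suc (Suc m)) ^ 2"
      by (simp add: mult.commute)
    then show "Q (Suc m) \<le> Q m"
      unfolding Q_def using central_ratio_pos[of "Suc m"] by (simp add: frac_le)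
  qed
  moreover have "Q \<longlonglongrightarrow> pi / 2"
  proof -
    have cancel: "1 / (a * q ^ 2) * (a / b) = 1 / (b * q ^ 2)" if "a > 0" "b > 0" "q > 0" for a b q :: real
      using that by (simp add: field_simps)
    have "Q = (\<lambda>m. (\<Prod>k=1..Suc m. 4 * real k ^ 2 / (4 * real k ^ 2 - 1))
                    * ((2 * real m + 3) / (2 * real m + 2)))"
    proof
      fix m
      have odd: "2 * real (Suc m) + 1 = 2 * real m + 3" by simp
      show "Q m = (\<Prod>k=1..Suc m. 4 * real k ^ 2 / (4 * real k ^ 2 - 1))
                    * ((2 * real m + 3) / (2 * real m + 2))"
        unfolding Q_def wallis_partial_product odd
        by (rule cancel[symmetric]) (simp_all add: central_ratio_pos)
    qed
    moreover have "(\<lambda>m. (\<Prod>k=1..Suc m. 4 * real k ^ 2 / (4 * real k ^ 2 - 1))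
                    * ((2 * real m + 3) / (2 * real m + 2))) \<longlonglongrightarrow> pi / 2 * 1"
      by (intro tendsto_mult LIMSEQ_Suc[OF wallis]) real_asymp
    ultimately show ?thesis by simp
  qed
  ultimately have "pi / 2 \<le> Q (n - 1)"
    by (rule decseq_ge)
  then show ?thesis
    using assms central_ratio_pos[of n] pi_gt_zero by (simp add: Q_def field_simps)
qed

section \<open>The expected distance\<close>

lemma choose_two_real: "real (n choose 2) = real n * (real n - 1) / 2"
proof (cases n)
  case (Suc m)
  have "2 * (n choose 2) = n * m"
    using times_binomial_minus1_eq[of 2 n] Suc by simp
  then have "2 * real (n choose 2) = real n * real m"
    by (metis of_nat_mult of_nat_numeral)
  then show ?thesis using Suc by (simp add: field_simps)
qed simp

lemma expected_dist_eq_total_wiener: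
  "expected_dist n = real (total_wiener n) / (real (n choose 2) * real (card (bintrees n)))"
proof -
  have "(\<Sum>t\<in>bintrees n. real (wiener t) / real (card (vpairs t)))
      = real (total_wiener n) / real (n choose 2)"
    by (simp add: card_vpairs size_bintrees total_wiener_def sum_divide_distrib)
  then show ?thesis unfolding expected_dist_def by simp
qed

lemma expected_dist_closed:
  assumes "n \<ge> 2"
  shows "expected_dist n = (real n + 1) * (real n + 2) / (real n * (real n - 1)) / central_ratio n
                           - 2 * (2 * real n + 1) * (real n + 1) / (real n * (real n - 1))"
proof -
  have rearrange: "((x + 2) / 2 * f - (2 * x + 1) * b) / ((x * (x - 1) / 2) * (b / (x + 1)))
      = (x + 1) * (x + 2) / (x * (x - 1)) / (b / f) - 2 * (2 * x + 1) * (x + 1) / (x * (x - 1))"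
    if "x \<ge> 2" "b > 0" "f > 0" for x b f :: real
    using that by (simp add: divide_simps) (simp add: algebra_simps)
  show ?thesis
    unfolding expected_dist_eq_total_wiener total_wiener_closed choose_two_real card_bintrees
      central_ratio_def
    by (rule rearrange) (use assms in simp_all)
qed

text \<open>Here \<open>R\<close> stands for \<open>4\<^sup>n / binom 2n n\<close>: the two bounds on \<open>R\<^sup>2\<close> differ only by \<open>pi / 2\<close>,
  so \<open>R - sqrt (pi N)\<close> is of order \<open>1 / sqrt N\<close>.\<close>

lemma sqrt_approx_gap:
  fixes N R :: real
  assumes N: "N \<ge> 1" and lower: "sqrt (pi * N) \<le> R" and upper: "R ^ 2 \<le> pi * N + pi / 2"
  shows "R - sqrt (pi * N) \<le> 1 / sqrt N"
proof -
  define a s where "a = sqrt (pi * N)" and "s = sqrt N"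
  have "s \<le> a"
    unfolding a_def s_def using N pi_ge_two
    by (intro real_sqrt_le_mono) (simp add: mult_right_mono[of 1 pi N])
  moreover have "s > 0" using N by (simp add: s_def)
  ultimately have a_pos: "a > 0" by linarith
  have a_sq: "a ^ 2 = pi * N" using N by (simp add: a_def)
  have "(R - a) * (2 * a) \<le> (R - a) * (R + a)"
    using lower by (intro mult_left_mono) (auto simp: a_def)
  also have "\<dots> = R ^ 2 - a ^ 2" by (simp add: power2_eq_square algebra_simps)
  also have "\<dots> \<le> pi / 2" using upper a_sq by simp
  finally have "R - a \<le> pi / (4 * a)" using a_pos by (simp add: field_simps)
  also have "\<dots> \<le> pi / (4 * s)" using \<open>s \<le> a\<close> \<open>s > 0\<close> by (intro divide_left_mono) auto
  also have "\<dots> \<le> 4 / (4 * s)" using \<open>s > 0\<close> pi_less_4 by (intro divide_right_mono) auto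
  finally show ?thesis by (simp add: a_def s_def)
qed

lemma expected_dist_error_bound:
  fixes N R :: real
  assumes N: "N \<ge> 2" and lower: "sqrt (pi * N) \<le> R" and upper: "R ^ 2 \<le> pi * N + pi / 2"
  shows "\<bar>(N + 1) * (N + 2) / (N * (N - 1)) * R - 2 * (2 * N + 1) * (N + 1) / (N * (N - 1))
           - (sqrt (pi * N) - 4)\<bar> \<le> 53 / sqrt N"
proof -
  define a s D where "a = sqrt (pi * N)" and "s = sqrt N" and "D = N * (N - 1)"
  have s_pos: "s > 0" and s_ge: "s \<ge> 1" and s_sq: "s ^ 2 = N" using N by (simp_all add: s_def)
  have D_pos: "D > 0" using N by (simp add: D_def)
  have "0 \<le> a" using N by (simp add: a_def)
  then have R_pos: "R \<ge> 0" using lower a_def by linarith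
  have "pi * N \<le> 4 * N"
    using mult_right_mono[of pi 4 N] pi_less_4 N by simp
  then have "R ^ 2 \<le> 9 * N"
    using upper pi_less_4 N by linarith
  then have "R ^ 2 \<le> (3 * s) ^ 2"
    by (simp add: power_mult_distrib s_sq)
  then have R_le: "R \<le> 3 * s"
    by (rule power2_le_imp_le) (use s_pos in simp)
  have num1: "(N + 1) * (N + 2) = D + (4 * N + 2)"
    and num2: "2 * (2 * N + 1) * (N + 1) = 4 * D + (10 * N + 2)"
    by (simp_all add: D_def algebra_simps)
  have "(N + 1) * (N + 2) / D * R = R + R * ((4 * N + 2) / D)"
    unfolding num1 add_divide_distrib using D_pos by (simp add: algebra_simps)
  moreover have "2 * (2 * N + 1) * (N + 1) / D = 4 + (10 * N + 2) / D"
    unfolding num2 add_divide_distrib using D_pos by simp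
  ultimately have split: "(N + 1) * (N + 2) / D * R - 2 * (2 * N + 1) * (N + 1) / D - (a - 4)
      = (R - a) + R * ((4 * N + 2) / D) - (10 * N + 2) / D"
    by simp
  have "R * ((4 * N + 2) / D) \<le> 30 / s"
  proof -
    have "(4 * N + 2) / D \<le> 10 / N" using N D_pos by (simp add: D_def field_simps)
    then have "R * ((4 * N + 2) / D) \<le> (3 * s) * (10 / N)"
      using R_le R_pos D_pos N by (intro mult_mono) auto
    also have "\<dots> = 30 / s"
      using s_pos by (simp add: s_sq[symmetric] power2_eq_square)
    finally show ?thesis .
  qed
  moreover have "(10 * N + 2) / D \<le> 22 / s"
  proof -
    have "(10 * N + 2) / D \<le> 22 / N" using N D_pos by (simp add: D_def field_simps)
    also have "\<dots> \<le> 22 / s"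
      using s_pos s_ge by (intro divide_left_mono) (auto simp: s_sq[symmetric] power2_eq_square)
    finally show ?thesis .
  qed
  moreover have "0 \<le> R * ((4 * N + 2) / D)" "0 \<le> (10 * N + 2) / D"
    using R_pos D_pos N by simp_all
  moreover have "53 / s = 1 / s + 30 / s + 22 / s" by simp
  moreover have "0 \<le> R - a" "R - a \<le> 1 / s"
    using lower sqrt_approx_gap[OF _ lower upper] N by (simp_all add: a_def s_def)
  ultimately show ?thesis
    unfolding a_def[symmetric] s_def[symmetric] D_def[symmetric] split abs_le_iff by linarith
qed

lemma expected_dist_asymptotics:
  "(\<lambda>n. expected_dist n - (sqrt (pi * real n) - 4)) \<in> O(\<lambda>n. 1 / sqrt (real n))"
proof (rule bigoI[where c = 53], unfold eventually_at_top_linorder, intro exI allI impI)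
  fix n :: nat assume n: "n \<ge> 2"
  let ?q = "central_ratio n"
  have q: "?q > 0" by (rule central_ratio_pos)
  have "sqrt (pi * real n) \<le> sqrt ((1 / ?q) ^ 2)"
    using central_ratio_sq_upper[of n] n q pi_gt_zero by (intro real_sqrt_le_mono) (simp add: field_simps)
  then have lower: "sqrt (pi * real n) \<le> 1 / ?q"
    using q by simp
  have upper: "(1 / ?q) ^ 2 \<le> pi * real n + pi / 2"
    using central_ratio_sq_lower[of n] q pi_gt_zero by (simp add: field_simps)
  show "norm (expected_dist n - (sqrt (pi * real n) - 4)) \<le> 53 * norm (1 / sqrt (real n))"
    using expected_dist_error_bound[OF _ lower upper] n by (simp add: expected_dist_closed)
qed

theorem mainTheorem15:
  shows "(\<forall>n::nat. n \<ge> 1 \<longrightarrow>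
            real (total_wiener n) = (real n + 2) / 2 * 4 ^ n - fact (2 * n + 1) / (fact n) ^ 2)
       \<and> (\<forall>x::real. \<bar>x\<bar> < 1 / 4 \<longrightarrow>
            (\<lambda>n. real (total_wiener n) * x ^ n) sums ((1 - sqrt (1 - 4 * x) - 2 * x) / (1 - 4 * x) ^ 2))
       \<and> (\<forall>n::nat. n \<ge> 1 \<longrightarrow>
            real (num_pairs n) = real (n choose 2) * (1 / (real n + 1)) * real ((2 * n) choose n))
       \<and> (\<lambda>n. expected_dist n - (sqrt (pi * real n) - 4)) \<in> O(\<lambda>n. 1 / sqrt (real n))"
proof (intro conjI allI impI)
  fix n :: nat
  show "real (total_wiener n) = (real n + 2) / 2 * 4 ^ n - fact (2 * n + 1) / (fact n) ^ 2"
    unfolding fact_odd_div_fact_squared by (rule total_wiener_closed)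
  show "real (num_pairs n) = real (n choose 2) * (1 / (real n + 1)) * real ((2 * n) choose n)"
    by (simp add: num_pairs_eq card_bintrees)
next
  fix x :: real
  assume "\<bar>x\<bar> < 1 / 4"
  then show "(\<lambda>n. real (total_wiener n) * x ^ n) sums ((1 - sqrt (1 - 4 * x) - 2 * x) / (1 - 4 * x) ^ 2)"
    by (rule total_wiener_sums)
qed (rule expected_dist_asymptotics)

end
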